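(* Consider any sequences $\{(x_k,y_k,\gamma_k)\}_{k\ge0}$, $\{(\tilde x_k,u_k,\tilde\gamma_k)\}_{k\ge1}$ generated by the inexact symmetric proximal ADMM described in the context, and set $p_k=B(y_k-y_{k-1})$, $q_k=-\beta(A\tilde x_k+By_k-b)$ for $k\ge1$. Then: (a) $\min\{2\vartheta\langle p_1,q_1\rangle,\ -\|y_1-y_0\|_H^2\}\ge-4d_0$; (b) for every $k\ge2$, $$2(1+\tau)\langle p_k,q_k\rangle\ge2(1-\theta)\langle p_k,q_{k-1}\rangle-2\tau\beta\|p_k\|^2+\|y_k-y_{k-1}\|_H^2-\|y_{k-1}-y_{k-2}\|_H^2.$$
   Context: Let $f:\mathbb{R}^n\to(-\infty,\infty]$ and $g:\mathbb{R}^p\to(-\infty,\infty]$ be proper closed convex functions, $A\in\mathbb{R}^{m\times n}$, $B\in\mathbb{R}^{m\times p}$, $b\in\mathbb{R}^m$ (problem: $\min\{f(x)+g(y):Ax+By=b\}$). Standing assumption: there exists $(x^*,y^*,\gamma^* )$ solving the Lagrangian system $0\in\partial f(x)-A^*\gamma$, $0\in\partial g(y)-B^*\gamma$, $0=Ax+By-b$. Here $\partial$ is the subdifferential, $A^*$ the transpose, $\mathbb{S}^n_{++}$ ($\mathbb{S}^p_+$) the symmetric positive definite (semidefinite) matrices, and $\|z\|_Q=\sqrt{\langle Qz,z\rangle}$ for $Q$ positive semidefinite. Algorithm (inexact symmetric proximal ADMM): given $(x_0,y_0,\gamma_0)\in\mathbb{R}^n\times\mathbb{R}^p\times\mathbb{R}^m$,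 $\beta>0$, $\tilde\sigma,\hat\sigma\in[0,1)$, $G\in\mathbb{S}^n_{++}$, $H\in\mathbb{S}^p_+$, and $(\tau,\theta)\in\mathcal R_{\tilde\sigma}:=\{(\tau,\theta):\tau\in(-1,1-\tilde\sigma),\ \tau+\theta>0,\ (1-\tau^2)(2-\tau-\theta-\tilde\sigma)-(1-\theta)^2(1-\tau-\tilde\sigma)>0\}$. For $k=1,2,\dots$: compute $(\tilde x_k,u_k)$ with $u_k\in\partial f(\tilde x_k)-A^*\tilde\gamma_k$ and $\|\tilde x_k-x_{k-1}+G^{-1}u_k\|_G^2\le\frac{\tilde\sigma}{\beta}\|\tilde\gamma_k-\gamma_{k-1}\|^2+\hat\sigma\|\tilde x_k-x_{k-1}\|_G^2$, where $\tilde\gamma_k=\gamma_{k-1}-\beta(A\tilde x_k+By_{k-1}-b)$; set $\gamma_{k-1/2}=\gamma_{k-1}-\tau\beta(A\tilde x_k+By_{k-1}-b)$; let $y_k$ be an optimal solution of $\min_y\{g(y)-\langle\gamma_{k-1/2},By\rangle+\frac\beta2\|A\tilde x_k+By-b\|^2+\frac12\|y-y_{k-1}\|_H^2\}$; set $x_k=x_{k-1}-G^{-1}u_k$ and $\gamma_k=\gamma_{k-1/2}-\theta\beta(A\tilde x_k+By_k-b)$. Definitions: $T(x,y,\gamma)=(\partial f(x)-A^*\gamma,\ \partial g(y)-B^*\gamma,\ Ax+By-b)$; $M=\begin{bmatrix}G&0&0\\0&H+\frac{(\tau-\tau\theta+\theta)\beta}{\tau+\theta}B^*B&-\frac{\tau}{\tau+\theta}B^*\\0&-\frac{\tau}{\tau+\theta}B&\frac{1}{(\tau+\theta)\beta}I\end{bmatrix}$;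 $z_0=(x_0,y_0,\gamma_0)$; $d_0=\inf\{\|z^*-z_0\|_M^2: z^*\in T^{-1}(0)\}$; $\vartheta=\sqrt{(3-3\tau-2\tilde\sigma)(4-\tau-\theta-2\tilde\sigma)}-2(1-\tau-\tilde\sigma)$. *)

theory Defs
  imports "HOL-Analysis.Analysis"
begin

text \<open>Extended-real-valued functions f : R^n -> (-inf, +inf], encoded as ereal-valued
functions that never take the value -inf.\<close>

definition epigraph :: "('a \<Rightarrow> ereal) \<Rightarrow> ('a \<times> real) set" where
  "epigraph f = {(x, t). f x \<le> ereal t}"

definition proper_fun :: "('a \<Rightarrow> ereal) \<Rightarrow> bool" where
  "proper_fun f \<longleftrightarrow> (\<forall>x. f x \<noteq> -\<infinity>) \<and> (\<exists>x. f x \<noteq> \<infinity>)"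

definition convex_fun :: "('a::real_vector \<Rightarrow> ereal) \<Rightarrow> bool" where
  "convex_fun f \<longleftrightarrow> convex (epigraph f)"

definition closed_fun :: "('a::topological_space \<Rightarrow> ereal) \<Rightarrow> bool" where
  "closed_fun f \<longleftrightarrow> closed (epigraph f)"

definition subdiff :: "('a::real_inner \<Rightarrow> ereal) \<Rightarrow> 'a \<Rightarrow> 'a set" where
  "subdiff f x = {v. f x \<noteq> \<infinity> \<and> (\<forall>z. f z \<ge> f x + ereal (v \<bullet> (z - x)))}"

definition qnorm2 :: "real^'n^'n \<Rightarrow> real^'n \<Rightarrow> real" where
  "qnorm2 Q z = (Q *v z) \<bullet> z"

definition sym_mat :: "real^'n^'n \<Rightarrow> bool" where
  "sym_mat Q \<longleftrightarrow> transpose Q = Q"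

definition pos_def :: "real^'n^'n \<Rightarrow> bool" where
  "pos_def Q \<longleftrightarrow> sym_mat Q \<and> (\<forall>z. z \<noteq> 0 \<longrightarrow> qnorm2 Q z > 0)"

definition pos_semidef :: "real^'n^'n \<Rightarrow> bool" where
  "pos_semidef Q \<longleftrightarrow> sym_mat Q \<and> (\<forall>z. qnorm2 Q z \<ge> 0)"

definition admissible_region :: "real \<Rightarrow> (real \<times> real) set" where
  "admissible_region s = {(\<tau>, \<theta>). -1 < \<tau> \<and> \<tau> < 1 - s \<and> \<tau> + \<theta> > 0 \<and>
      (1 - \<tau>^2) * (2 - \<tau> - \<theta> - s) - (1 - \<theta>)^2 * (1 - \<tau> - s) > 0}"

text \<open>Zeros of the operator T(x,y,gamma) = (df(x) - A^* gamma, dg(y) - B^* gamma, Ax+By-b).\<close>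
definition T_zeros ::
  "(real^'n \<Rightarrow> ereal) \<Rightarrow> (real^'p \<Rightarrow> ereal) \<Rightarrow> real^'n^'m \<Rightarrow> real^'p^'m \<Rightarrow> real^'m
     \<Rightarrow> ((real^'n) \<times> (real^'p) \<times> (real^'m)) set" where
  "T_zeros f g A B b = {(x, y, \<gamma>).
      transpose A *v \<gamma> \<in> subdiff f x \<and> transpose B *v \<gamma> \<in> subdiff g y \<and>
      A *v x + B *v y - b = 0}"

text \<open>||(x,y,gamma)||_M^2 for the block matrix M of the paper, written out:
  <Gx,x> + <Hy,y> + (tau - tau theta + theta) beta/(tau+theta) ||By||^2
   - 2 tau/(tau+theta) <By,gamma> + 1/((tau+theta) beta) ||gamma||^2.\<close>
definition Mnorm2 ::
  "real^'n^'n \<Rightarrow> real^'p^'p \<Rightarrow> real^'p^'m \<Rightarrow> real \<Rightarrow> real \<Rightarrow> real \<Rightarrow>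
     (real^'n) \<times> (real^'p) \<times> (real^'m) \<Rightarrow> real" where
  "Mnorm2 G H B \<beta> \<tau> \<theta> z = (case z of (x, y, \<gamma>) \<Rightarrow>
      qnorm2 G x + qnorm2 H y
      + ((\<tau> - \<tau> * \<theta> + \<theta>) * \<beta> / (\<tau> + \<theta>)) * ((B *v y) \<bullet> (B *v y))
      - 2 * (\<tau> / (\<tau> + \<theta>)) * ((B *v y) \<bullet> \<gamma>)
      + (1 / ((\<tau> + \<theta>) * \<beta>)) * (\<gamma> \<bullet> \<gamma>))"

definition d0 ::
  "(real^'n \<Rightarrow> ereal) \<Rightarrow> (real^'p \<Rightarrow> ereal) \<Rightarrow> real^'n^'m \<Rightarrow> real^'p^'m \<Rightarrow> real^'m \<Rightarrow>
   real^'n^'n \<Rightarrow> real^'p^'p \<Rightarrow> real \<Rightarrow> real \<Rightarrow> real \<Rightarrow>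
   (real^'n) \<times> (real^'p) \<times> (real^'m) \<Rightarrow> ereal" where
  "d0 f g A B b G H \<beta> \<tau> \<theta> z0 =
     (INF zs \<in> T_zeros f g A B b. ereal (Mnorm2 G H B \<beta> \<tau> \<theta> (zs - z0)))"

definition vartheta :: "real \<Rightarrow> real \<Rightarrow> real \<Rightarrow> real" where
  "vartheta \<tau> \<theta> s = sqrt ((3 - 3 * \<tau> - 2 * s) * (4 - \<tau> - \<theta> - 2 * s)) - 2 * (1 - \<tau> - s)"

end

theory Submission
  imports Defs
begin

(* Part (b): by the optimality condition of the y-subproblem,
   B^T (gamma-hat_k + q_k) - H (y_k - y_(k-1)) is a subgradient of g at y_k.  Monotonicity of the
   subdifferential of g at y_k and y_(k-1), the multiplier recursion
   (gamma-hat_k + q_k) - (gamma-hat_(k-1) + q_(k-1)) = (1 + tau) q_k + tau beta p_k - (1 - theta) q_(k-1)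
   and 2 <H e', e> <= ||e||_H^2 + ||e'||_H^2 give the inequality.

   Part (a): for a solution z* of the Lagrangian system, monotonicity of the subdifferentials of f
   and g between the first iterate and z*, together with the inexactness criterion, yields
   4 ||z* - z_0||_M^2 >= 3 ||y_1 - y_0||_H^2 + S(p_1, q_1) for an explicit quadratic form S.  On the
   admissible region S is nonnegative and, by completing a square, at least -2 vartheta <p_1, q_1>.
   Taking the infimum over z* gives (a); without solutions d_0 is infinite and (a) is trivial. *)

lemma sym_mat_inner_commute:
  assumes "sym_mat Q"
  shows "(Q *v a) \<bullet> b = (Q *v b) \<bullet> a"
  using assms unfolding sym_mat_def
  by (metis dot_lmul_matrix inner_commute transpose_matrix_vector)

lemma qnorm2_add:
  assumes "sym_mat Q"
  shows "qnorm2 Q (a + b) = qnorm2 Q a + 2 * ((Q *v a) \<bullet> b) + qnorm2 Q b"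
  using sym_mat_inner_commute[OF assms, of b a]
  by (simp add: qnorm2_def matrix_vector_right_distrib inner_add_left inner_add_right)

lemma qnorm2_scaleR: "qnorm2 Q (c *\<^sub>R a) = c\<^sup>2 * qnorm2 Q a"
  by (simp add: qnorm2_def matrix_vector_mult_scaleR power2_eq_square)

lemma qnorm2_diff:
  assumes "sym_mat Q"
  shows "qnorm2 Q (a - b) = qnorm2 Q a - 2 * ((Q *v a) \<bullet> b) + qnorm2 Q b"
  using sym_mat_inner_commute[OF assms, of b a]
  by (simp add: qnorm2_def matrix_vector_mult_diff_distrib inner_diff_left inner_diff_right)

lemma four_qnorm2_eq:
  assumes "sym_mat Q"
  shows "4 * qnorm2 Q a = qnorm2 Q (2 *\<^sub>R a - b) + 4 * ((Q *v a) \<bullet> b) - qnorm2 Q b"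
  using qnorm2_diff[OF assms, of "2 *\<^sub>R a" b]
  by (simp add: qnorm2_scaleR matrix_vector_mult_scaleR)

lemma four_qnorm2_ge:
  assumes "pos_semidef Q"
  shows "4 * ((Q *v b) \<bullet> a) - qnorm2 Q b \<le> 4 * qnorm2 Q a"
proof -
  have "0 \<le> qnorm2 Q (2 *\<^sub>R a - b)" using assms by (simp add: pos_semidef_def)
  then show ?thesis
    using assms four_qnorm2_eq[of Q a b] sym_mat_inner_commute[of Q a b]
    by (simp add: pos_semidef_def)
qed

lemma qnorm2_three_point_bound:
  assumes "pos_semidef Q"
  shows "4 * ((Q *v w) \<bullet> (c - a)) + 2 * qnorm2 Q c - 2 * qnorm2 Q (c + w) \<le> 4 * qnorm2 Q a"
proof -
  have sym: "sym_mat Q" using assms by (simp add: pos_semidef_def)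
  have "4 * ((Q *v ((-1) *\<^sub>R w)) \<bullet> a) - qnorm2 Q ((-1) *\<^sub>R w) \<le> 4 * qnorm2 Q a"
    by (rule four_qnorm2_ge[OF assms])
  then have "- 4 * ((Q *v w) \<bullet> a) - qnorm2 Q w \<le> 4 * qnorm2 Q a"
    unfolding qnorm2_scaleR matrix_vector_mult_scaleR by simp
  moreover have "qnorm2 Q (c + w) = qnorm2 Q c + 2 * ((Q *v w) \<bullet> c) + qnorm2 Q w"
    using qnorm2_add[OF sym, of c w] sym_mat_inner_commute[OF sym, of c w] by simp
  moreover have "0 \<le> qnorm2 Q w" using assms by (simp add: pos_semidef_def)
  ultimately show ?thesis by (simp add: inner_diff_right)
qed

lemma pos_semidef_inner_le:
  assumes "pos_semidef Q"
  shows "2 * ((Q *v a) \<bullet> b) \<le> qnorm2 Q a + qnorm2 Q b"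
proof -
  have "0 \<le> qnorm2 Q (a - b)" using assms by (simp add: pos_semidef_def)
  then show ?thesis
    using assms by (simp add: pos_semidef_def qnorm2_diff)
qed

lemma pos_def_imp_pos_semidef: "pos_def Q \<Longrightarrow> pos_semidef Q"
  unfolding pos_def_def pos_semidef_def
  by (metis order.refl less_imp_le qnorm2_def matrix_vector_mult_0_right inner_zero_left)

lemma pos_def_matrix_inv_right:
  assumes "pos_def Q"
  shows "Q *v (matrix_inv Q *v v) = v"
proof -
  have "\<forall>z. Q *v z = 0 \<longrightarrow> z = 0"
    using assms unfolding pos_def_def qnorm2_def by force
  then have "invertible Q"
    by (simp add: matrix_left_invertible_ker invertible_left_inverse)
  then have "Q ** matrix_inv Q = mat 1"
    unfolding matrix_inv_def invertible_def
    by (rule someI_ex[where P = "\<lambda>Q'. Q ** Q' = mat 1 \<and> Q' ** Q = mat 1", THEN conjunct1])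
  then show ?thesis
    by (simp add: matrix_vector_mul_assoc)
qed

lemma subdiff_monotone:
  assumes "\<And>z. f z \<noteq> -\<infinity>" "v \<in> subdiff f x" "w \<in> subdiff f z"
  shows "0 \<le> (v - w) \<bullet> (x - z)"
proof -
  from assms(2,3) have fx: "f x \<noteq> \<infinity>" and fz: "f z \<noteq> \<infinity>"
    and "f z \<ge> f x + ereal (v \<bullet> (z - x))" and "f x \<ge> f z + ereal (w \<bullet> (x - z))"
    by (auto simp: subdiff_def)
  moreover obtain a c where "f x = ereal a" "f z = ereal c"
    using fx fz assms(1)[of x] assms(1)[of z] by (cases "f x"; cases "f z") auto
  ultimately have "v \<bullet> (z - x) + w \<bullet> (x - z) \<le> 0" by simp
  then show ?thesis
    by (simp add: inner_diff_left inner_diff_right inner_commute)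
qed

lemma convex_funD:
  fixes g :: "'a::real_vector \<Rightarrow> ereal"
  assumes "convex_fun g" "g x = ereal a" "g y = ereal b" "0 \<le> t" "t \<le> 1"
  shows "g ((1 - t) *\<^sub>R x + t *\<^sub>R y) \<le> ereal ((1 - t) * a + t * b)"
proof -
  have "(x, a) \<in> epigraph g" "(y, b) \<in> epigraph g" using assms by (auto simp: epigraph_def)
  then have "(1 - t) *\<^sub>R (x, a) + t *\<^sub>R (y, b) \<in> epigraph g"
    using assms(1,4,5) unfolding convex_fun_def by (intro convexD) auto
  then show ?thesis by (simp add: epigraph_def)
qed

lemma subdiff_of_minimizer_plus_quadratic:
  fixes g :: "'a::real_inner \<Rightarrow> ereal" and Q C :: "'a \<Rightarrow> real"
  assumes proper: "proper_fun g" and convex: "convex_fun g"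
    and min: "\<And>w. g y + ereal (Q y) \<le> g w + ereal (Q w)"
    and expand: "\<And>d t. Q (y + t *\<^sub>R d) = Q y + t * (v \<bullet> d) + t\<^sup>2 * C d"
  shows "- v \<in> subdiff g y"
proof -
  have neq_minf: "g z \<noteq> -\<infinity>" for z using proper by (simp add: proper_fun_def)
  obtain w0 where "g w0 \<noteq> \<infinity>" using proper by (auto simp: proper_fun_def)
  then have "g y \<noteq> \<infinity>" using min[of w0] neq_minf[of w0] by (cases "g w0") auto
  then obtain b where b: "g y = ereal b" using neq_minf[of y] by (cases "g y") auto
  have "g w \<ge> g y + ereal (- v \<bullet> (w - y))" for w
  proof (cases "g w")
    case (real a)
    define d where "d = w - y"
    have "a - b + v \<bullet> d + t * C d \<ge> 0" if t: "0 < t" "t < 1" for t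
    proof -
      have "(1 - t) *\<^sub>R y + t *\<^sub>R w = y + t *\<^sub>R d" by (simp add: d_def algebra_simps)
      then have "g (y + t *\<^sub>R d) \<le> ereal ((1 - t) * b + t * a)"
        using convex_funD[OF convex b real, of t] t by simp
      then obtain c where c: "g (y + t *\<^sub>R d) = ereal c" "c \<le> (1 - t) * b + t * a"
        using neq_minf[of "y + t *\<^sub>R d"] by (cases "g (y + t *\<^sub>R d)") auto
      have "b + Q y \<le> c + Q (y + t *\<^sub>R d)" using min[of "y + t *\<^sub>R d"] b c by simp
      with c(2) have "0 \<le> t * (a - b + v \<bullet> d + t * C d)"
        unfolding expand by (simp add: algebra_simps power2_eq_square)
      with t show ?thesis by (simp add: zero_le_mult_iff)
    qed
    then have "\<forall>\<^sub>F t in at_right 0. 0 \<le> a - b + v \<bullet> d + t * C d"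
      using eventually_at_right_real[of 0 1] by (auto elim: eventually_mono)
    moreover have "((\<lambda>t. a - b + v \<bullet> d + t * C d) \<longlongrightarrow> a - b + v \<bullet> d) (at_right 0)"
      by (auto intro!: tendsto_eq_intros)
    ultimately have "0 \<le> a - b + v \<bullet> d"
      by (intro tendsto_lowerbound) auto
    then show ?thesis using real b by (simp add: d_def)
  qed (use neq_minf in auto)
  with \<open>g y \<noteq> \<infinity>\<close> show ?thesis by (simp add: subdiff_def)
qed

lemma region_polynomial_nonneg:
  fixes a m :: real
  assumes "0 < a" "a \<le> m" "m < 2"
  defines "K \<equiv> m * (2 - m)"
  shows "a * (K + 4 * a)\<^sup>2 + K * (K + 4 * a) * (2 * a + m) - K * a * (2 * a + m)\<^sup>2 \<ge> 0"
proof -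
  have m: "0 < m" using assms by linarith
  have K0: "0 < K" using assms m by (simp add: K_def)
  have "K = 1 - (m - 1)\<^sup>2" by (simp add: K_def power2_eq_square algebra_simps)
  then have K1: "K \<le> 1" by simp
  have "a * (K + 4 * a)\<^sup>2 + K * (K + 4 * a) * (2 * a + m) - K * a * (2 * a + m)\<^sup>2
     = 4 * a^3 * (1 - K) + 4 * a^2 * K * (2 - m) + a * m * K * (2 - m)
       + 12 * a^3 + 8 * a^2 * K + 3 * a * K\<^sup>2 + m * K\<^sup>2 + 2 * a * m * K"
    by (simp add: algebra_simps power2_eq_square power3_eq_cube)
  also have "\<dots> \<ge> 0"
    using assms K0 K1 m by (intro add_nonneg_nonneg mult_nonneg_nonneg) auto
  finally show ?thesis .
qed

lemma admissible_region_product_bound: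
  assumes region: "(\<tau>, \<theta>) \<in> admissible_region \<sigma>" and "0 \<le> \<sigma>"
  shows "4 * (1 - \<tau> - \<sigma>)\<^sup>2 \<le> (3 - 3 * \<tau> - 2 * \<sigma>) * (4 - \<tau> - \<theta> - 2 * \<sigma>)"
proof -
  define a where "a = 1 - \<tau> - \<sigma>"
  define m where "m = 1 - \<tau>"
  define K where "K = m * (2 - m)"
  define t where "t = \<theta> - 1"
  define S where "S = 2 * a + m"
  have am: "0 < a" "a \<le> m" "m < 2" using assms by (auto simp: a_def m_def admissible_region_def)
  have K0: "0 < K" using am by (simp add: K_def)
  have S0: "0 < S" using am by (simp add: S_def)
  have "(3 - 3 * \<tau> - 2 * \<sigma>) * (4 - \<tau> - \<theta> - 2 * \<sigma>) - 4 * (1 - \<tau> - \<sigma>)\<^sup>2 = K + 4 * a - t * S"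
    by (simp add: K_def m_def a_def t_def S_def algebra_simps power2_eq_square)
  moreover have "t * S \<le> K + 4 * a"
  proof (rule ccontr)
    assume "\<not> t * S \<le> K + 4 * a"
    then have U: "0 < K + 4 * a" "K + 4 * a < t * S" using K0 am by auto
    \<comment> \<open>\<open>T \<mapsto> K a S\<^sup>2 - K T S - a T\<^sup>2\<close> is decreasing for \<open>T > 0\<close>, nonpositive at \<open>T = K + 4a\<close>
       but positive at \<open>T = t S\<close> by the defining inequality of the region\<close>
    have "K * (a - t) - t\<^sup>2 * a > 0"
      using region by (simp add: admissible_region_def K_def m_def a_def t_def algebra_simps power2_eq_square)
    then have "0 < S\<^sup>2 * (K * (a - t) - t\<^sup>2 * a)" using S0 by simp
    also have "\<dots> = K * a * S\<^sup>2 - K * (t * S) * S - a * (t * S)\<^sup>2"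
      by (simp add: algebra_simps power2_eq_square)
    also have "\<dots> < K * a * S\<^sup>2 - K * (K + 4 * a) * S - a * (K + 4 * a)\<^sup>2"
    proof -
      have "K * (K + 4 * a) * S < K * (t * S) * S" using U K0 S0 by simp
      moreover have "a * (K + 4 * a)\<^sup>2 < a * (t * S)\<^sup>2"
        using U am by (simp add: power_strict_mono)
      ultimately show ?thesis by linarith
    qed
    also have "\<dots> \<le> 0"
      using region_polynomial_nonneg[OF am] by (simp add: K_def S_def)
    finally show False by simp
  qed
  ultimately show ?thesis by simp
qed

lemma admissible_region_coeffs_pos:
  assumes "(\<tau>, \<theta>) \<in> admissible_region \<sigma>" and "0 \<le> \<sigma>"
  shows "0 < 1 - \<tau> - \<sigma>" "0 < 3 - 3 * \<tau> - 2 * \<sigma>" "0 < 4 - \<tau> - \<theta> - 2 * \<sigma>"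
proof -
  show a: "0 < 1 - \<tau> - \<sigma>" and X: "0 < 3 - 3 * \<tau> - 2 * \<sigma>"
    using assms by (auto simp: admissible_region_def)
  have "0 < 4 * (1 - \<tau> - \<sigma>)\<^sup>2" using a by simp
  also have "\<dots> \<le> (3 - 3 * \<tau> - 2 * \<sigma>) * (4 - \<tau> - \<theta> - 2 * \<sigma>)"
    using admissible_region_product_bound[OF assms] .
  finally show "0 < 4 - \<tau> - \<theta> - 2 * \<sigma>" using X by (simp add: zero_less_mult_iff)
qed

lemma vartheta_nonneg:
  assumes "(\<tau>, \<theta>) \<in> admissible_region \<sigma>" and "0 \<le> \<sigma>"
  shows "0 \<le> vartheta \<tau> \<theta> \<sigma>"
proof -
  have "(2 * (1 - \<tau> - \<sigma>))\<^sup>2 \<le> (3 - 3 * \<tau> - 2 * \<sigma>) * (4 - \<tau> - \<theta> - 2 * \<sigma>)"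
    using admissible_region_product_bound[OF assms] by (simp only: power_mult_distrib) simp
  then show ?thesis unfolding vartheta_def using real_le_rsqrt by simp
qed

(* The form S(p_1, q_1) left over by the first-step estimate of ||z* - z_0||_M^2. *)
definition pq_form :: "real \<Rightarrow> real \<Rightarrow> real \<Rightarrow> real \<Rightarrow> 'a::real_inner \<Rightarrow> 'a \<Rightarrow> real" where
  "pq_form \<beta> \<tau> \<theta> \<sigma> p q =
     ((3 - 3 * \<tau> - 2 * \<sigma>) * \<beta>\<^sup>2 * (p \<bullet> p) + (4 - \<tau> - \<theta> - 2 * \<sigma>) * (q \<bullet> q)
      + 4 * (1 - \<tau> - \<sigma>) * \<beta> * (p \<bullet> q)) / \<beta>"

lemma pq_form_ge_vartheta:
  assumes "0 < \<beta>" "(\<tau>, \<theta>) \<in> admissible_region \<sigma>" "0 \<le> \<sigma>"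
  shows "- 2 * vartheta \<tau> \<theta> \<sigma> * (p \<bullet> q) \<le> pq_form \<beta> \<tau> \<theta> \<sigma> p q"
proof -
  define X where "X = 3 - 3 * \<tau> - 2 * \<sigma>"
  define Y where "Y = 4 - \<tau> - \<theta> - 2 * \<sigma>"
  have XY: "0 < X" "0 < Y" using admissible_region_coeffs_pos[OF assms(2,3)] by (simp_all add: X_def Y_def)
  have sqrt_sq: "sqrt X * (sqrt X * z) = X * z" "sqrt Y * (sqrt Y * z) = Y * z" for z
    using XY by (simp_all add: mult.assoc[symmetric])
  define v where "v = (sqrt X * \<beta>) *\<^sub>R p + sqrt Y *\<^sub>R q"
  have "0 \<le> v \<bullet> v" by simp
  also have "\<dots> = X * \<beta>\<^sup>2 * (p \<bullet> p) + Y * (q \<bullet> q) + 2 * sqrt (X * Y) * \<beta> * (p \<bullet> q)"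
    using XY by (simp add: v_def inner_add_left inner_add_right inner_commute[of q p]
        real_sqrt_mult power2_eq_square algebra_simps sqrt_sq)
  also have "\<dots> = \<beta> * (pq_form \<beta> \<tau> \<theta> \<sigma> p q + 2 * vartheta \<tau> \<theta> \<sigma> * (p \<bullet> q))"
    using assms(1) by (simp add: pq_form_def vartheta_def X_def Y_def field_simps)
  finally show ?thesis using assms(1) by (simp add: zero_le_mult_iff)
qed

lemma pq_form_nonneg:
  assumes "0 < \<beta>" "(\<tau>, \<theta>) \<in> admissible_region \<sigma>" "0 \<le> \<sigma>"
  shows "0 \<le> pq_form \<beta> \<tau> \<theta> \<sigma> p q"
proof (cases "0 \<le> p \<bullet> q")
  case True
  then show ?thesis
    using assms(1) admissible_region_coeffs_pos[OF assms(2,3)] by (simp add: pq_form_def)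
next
  case False
  then have "0 \<le> - 2 * vartheta \<tau> \<theta> \<sigma> * (p \<bullet> q)"
    using vartheta_nonneg[OF assms(2,3)] by (simp add: mult_nonneg_nonpos)
  then show ?thesis using pq_form_ge_vartheta[OF assms, of p q] by linarith
qed

(* The (y, gamma)-block of ||.||_M^2, as a function of (B y, gamma). *)
definition coupling_norm2 :: "real \<Rightarrow> real \<Rightarrow> real \<Rightarrow> 'a::real_inner \<Rightarrow> 'a \<Rightarrow> real" where
  "coupling_norm2 \<beta> \<tau> \<theta> v g =
     ((\<tau> - \<tau> * \<theta> + \<theta>) * \<beta> / (\<tau> + \<theta>)) * (v \<bullet> v) - 2 * (\<tau> / (\<tau> + \<theta>)) * (v \<bullet> g)
     + (1 / ((\<tau> + \<theta>) * \<beta>)) * (g \<bullet> g)"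

lemma Mnorm2_eq:
  "Mnorm2 G H B \<beta> \<tau> \<theta> (x, y, g) = qnorm2 G x + qnorm2 H y + coupling_norm2 \<beta> \<tau> \<theta> (B *v y) g"
  by (simp add: Mnorm2_def coupling_norm2_def)

lemma coupling_norm2_eq:
  assumes "0 < \<beta>" "0 < \<tau> + \<theta>"
  shows "coupling_norm2 \<beta> \<tau> \<theta> v g
    = (g - (\<tau> * \<beta>) *\<^sub>R v) \<bullet> (g - (\<tau> * \<beta>) *\<^sub>R v) / ((\<tau> + \<theta>) * \<beta>) + (1 - \<tau>) * \<beta> * (v \<bullet> v)"
proof -
  define s where "s = \<tau> + \<theta>"
  have s: "s \<noteq> 0" "\<beta> \<noteq> 0" using assms by (auto simp: s_def)
  have coeff: "\<tau> - \<tau> * \<theta> + \<theta> = s * (1 - \<tau>) + \<tau>\<^sup>2"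
    by (simp add: s_def algebra_simps power2_eq_square)
  show ?thesis
    unfolding coupling_norm2_def coeff s_def[symmetric] using s
    by (simp add: inner_diff_left inner_diff_right inner_commute[of g v] field_simps power2_eq_square)
qed

lemma four_coupling_norm2_ge:
  assumes "0 < \<beta>" "0 < \<tau> + \<theta>" "\<tau> < 1"
  shows "4 * coupling_norm2 \<beta> \<tau> \<theta> v g
    \<ge> (4 * ((g - (\<tau> * \<beta>) *\<^sub>R v) \<bullet> q) - (\<tau> + \<theta>) * (q \<bullet> q)) / \<beta> + (1 - \<tau>) * \<beta> * (4 * (v \<bullet> p) - p \<bullet> p)"
proof -
  define c where "c = g - (\<tau> * \<beta>) *\<^sub>R v"
  define s where "s = \<tau> + \<theta>"
  have s: "0 < s" using assms by (simp add: s_def)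
  have "0 \<le> (2 *\<^sub>R c - s *\<^sub>R q) \<bullet> (2 *\<^sub>R c - s *\<^sub>R q)" by simp
  then have "(4 * (c \<bullet> q) - s * (q \<bullet> q)) * s \<le> 4 * (c \<bullet> c)"
    by (simp add: inner_diff_left inner_diff_right inner_commute[of q c] algebra_simps)
  then have "4 * (c \<bullet> q) - s * (q \<bullet> q) \<le> 4 * (c \<bullet> c) / s"
    by (subst pos_le_divide_eq[OF s])
  then have c_part: "(4 * (c \<bullet> q) - s * (q \<bullet> q)) / \<beta> \<le> 4 * (c \<bullet> c) / (s * \<beta>)"
    using assms(1) by (simp add: divide_right_mono flip: divide_divide_eq_left)
  have "0 \<le> (2 *\<^sub>R v - p) \<bullet> (2 *\<^sub>R v - p)" by simp
  then have "4 * (v \<bullet> p) - p \<bullet> p \<le> 4 * (v \<bullet> v)"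
    by (simp add: inner_diff_left inner_diff_right inner_commute[of p v])
  then have v_part: "(1 - \<tau>) * \<beta> * (4 * (v \<bullet> p) - p \<bullet> p) \<le> 4 * ((1 - \<tau>) * \<beta> * (v \<bullet> v))"
    using assms by (simp add: mult_left_mono)
  have "4 * coupling_norm2 \<beta> \<tau> \<theta> v g = 4 * (c \<bullet> c) / (s * \<beta>) + 4 * ((1 - \<tau>) * \<beta> * (v \<bullet> v))"
    using assms by (simp add: coupling_norm2_eq c_def s_def)
  then show ?thesis
    using c_part v_part unfolding c_def s_def by linarith
qed

(* The two subtracted pairings are the monotonicity terms of the first x- and y-step. *)
lemma first_step_identity:
  fixes p q v g :: "'a::real_inner"
  assumes "0 < \<beta>"
  shows "(4 * ((g - (\<tau> * \<beta>) *\<^sub>R v) \<bullet> q) - (\<tau> + \<theta>) * (q \<bullet> q)) / \<beta> + (1 - \<tau>) * \<beta> * (4 * (v \<bullet> p) - p \<bullet> p)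
    - 4 * ((q + \<beta> *\<^sub>R p - g) \<bullet> (v - p - (1 / \<beta>) *\<^sub>R q))
    - 4 * (((1 + \<tau>) *\<^sub>R q + (\<tau> * \<beta>) *\<^sub>R p - g) \<bullet> (p - v))
    - 2 * (\<sigma> / \<beta> * ((q + \<beta> *\<^sub>R p) \<bullet> (q + \<beta> *\<^sub>R p)))
    = pq_form \<beta> \<tau> \<theta> \<sigma> p q"
  using assms
  by (simp add: pq_form_def inner_diff_left inner_diff_right inner_add_left inner_add_right
      inner_commute[of q p] inner_commute[of v p] inner_commute[of g p] inner_commute[of q v] inner_commute[of g v]
      inner_commute[of q g] field_simps power2_eq_square)

locale inexact_sym_admm =
  fixes f :: "real^'n \<Rightarrow> ereal" and g :: "real^'p \<Rightarrow> ereal"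
    and A :: "real^'n^'m" and B :: "real^'p^'m" and b :: "real^'m"
    and G :: "real^'n^'n" and H :: "real^'p^'p"
    and \<beta> \<sigma>t \<sigma>h \<tau> \<theta> :: real
    and x :: "nat \<Rightarrow> real^'n" and y :: "nat \<Rightarrow> real^'p" and \<gamma> :: "nat \<Rightarrow> real^'m"
    and xt u :: "nat \<Rightarrow> real^'n" and \<gamma>t \<gamma>h p q :: "nat \<Rightarrow> real^'m"
  assumes f_proper: "proper_fun f"
    and g_proper: "proper_fun g" and g_convex: "convex_fun g"
    and \<beta>_pos: "0 < \<beta>" and \<sigma>t_nonneg: "0 \<le> \<sigma>t" and \<sigma>h_le_1: "\<sigma>h \<le> 1"
    and G_pd: "pos_def G" and H_psd: "pos_semidef H"
    and region: "(\<tau>, \<theta>) \<in> admissible_region \<sigma>t"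
    and \<gamma>t_def: "\<And>k. k \<ge> 1 \<Longrightarrow> \<gamma>t k = \<gamma> (k - 1) - \<beta> *\<^sub>R (A *v xt k + B *v y (k - 1) - b)"
    and u_sub: "\<And>k. k \<ge> 1 \<Longrightarrow> u k + transpose A *v \<gamma>t k \<in> subdiff f (xt k)"
    and err: "\<And>k. k \<ge> 1 \<Longrightarrow>
       qnorm2 G (xt k - x (k - 1) + matrix_inv G *v u k)
         \<le> (\<sigma>t / \<beta>) * norm (\<gamma>t k - \<gamma> (k - 1))^2 + \<sigma>h * qnorm2 G (xt k - x (k - 1))"
    and \<gamma>h_def: "\<And>k. k \<ge> 1 \<Longrightarrow> \<gamma>h k = \<gamma> (k - 1) - (\<tau> * \<beta>) *\<^sub>R (A *v xt k + B *v y (k - 1) - b)"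
    and y_opt: "\<And>k w. k \<ge> 1 \<Longrightarrow>
       g (y k) + ereal (- (\<gamma>h k \<bullet> (B *v y k)) + \<beta> / 2 * norm (A *v xt k + B *v y k - b)^2
                         + 1/2 * qnorm2 H (y k - y (k - 1)))
       \<le> g w + ereal (- (\<gamma>h k \<bullet> (B *v w)) + \<beta> / 2 * norm (A *v xt k + B *v w - b)^2
                         + 1/2 * qnorm2 H (w - y (k - 1)))"
    and \<gamma>_def: "\<And>k. k \<ge> 1 \<Longrightarrow> \<gamma> k = \<gamma>h k - (\<theta> * \<beta>) *\<^sub>R (A *v xt k + B *v y k - b)"
    and p_def: "\<And>k. k \<ge> 1 \<Longrightarrow> p k = B *v (y k - y (k - 1))"
    and q_def: "\<And>k. k \<ge> 1 \<Longrightarrow> q k = - \<beta> *\<^sub>R (A *v xt k + B *v y k - b)"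
begin

lemma H_sym: "sym_mat H"
  using H_psd by (simp add: pos_semidef_def)

lemma g_neq_minf: "g z \<noteq> -\<infinity>"
  using g_proper by (simp add: proper_fun_def)

lemma residual_prev_eq:
  assumes "k \<ge> 1"
  shows "\<beta> *\<^sub>R (A *v xt k + B *v y (k - 1) - b) = - q k - \<beta> *\<^sub>R p k"
  using assms by (simp add: q_def p_def matrix_vector_mult_diff_distrib algebra_simps)

lemma \<gamma>t_eq: "k \<ge> 1 \<Longrightarrow> \<gamma>t k = \<gamma> (k - 1) + q k + \<beta> *\<^sub>R p k"
  using residual_prev_eq[of k] by (simp add: \<gamma>t_def)

lemma \<gamma>h_eq:
  assumes "k \<ge> 1"
  shows "\<gamma>h k = \<gamma> (k - 1) + \<tau> *\<^sub>R q k + (\<tau> * \<beta>) *\<^sub>R p k"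
proof -
  have "\<gamma>h k = \<gamma> (k - 1) - \<tau> *\<^sub>R (\<beta> *\<^sub>R (A *v xt k + B *v y (k - 1) - b))"
    using \<gamma>h_def[OF assms] by simp
  then show ?thesis
    unfolding residual_prev_eq[OF assms] by (simp add: algebra_simps)
qed

lemma \<gamma>_eq: "k \<ge> 1 \<Longrightarrow> \<gamma> k = \<gamma>h k + \<theta> *\<^sub>R q k"
  by (simp add: \<gamma>_def q_def)

lemma multiplier_increment:
  assumes "k \<ge> 2"
  shows "(\<gamma>h k + q k) - (\<gamma>h (k - 1) + q (k - 1))
    = (1 + \<tau>) *\<^sub>R q k + (\<tau> * \<beta>) *\<^sub>R p k - (1 - \<theta>) *\<^sub>R q (k - 1)"
proof -
  have "\<gamma> (k - 1) = \<gamma>h (k - 1) + \<theta> *\<^sub>R q (k - 1)"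
    using assms by (intro \<gamma>_eq) simp
  then show ?thesis
    using assms \<gamma>h_eq[of k] by (simp add: algebra_simps)
qed

lemma y_step_subgradient:
  assumes k: "k \<ge> 1"
  shows "transpose B *v (\<gamma>h k + q k) - H *v (y k - y (k - 1)) \<in> subdiff g (y k)"
proof -
  define r where "r = A *v xt k + B *v y k - b"
  define e where "e = y k - y (k - 1)"
  define Q where "Q = (\<lambda>w. - (\<gamma>h k \<bullet> (B *v w)) + \<beta> / 2 * norm (A *v xt k + B *v w - b)^2
                         + 1/2 * qnorm2 H (w - y (k - 1)))"
  define v where "v = H *v e - transpose B *v (\<gamma>h k + q k)"
  have q: "q k = - \<beta> *\<^sub>R r" using q_def[OF k] by (simp add: r_def)
  have "Q (y k + t *\<^sub>R d) = Q (y k) + t * (v \<bullet> d) + t\<^sup>2 * (\<beta> / 2 * ((B *v d) \<bullet> (B *v d)) + 1/2 * qnorm2 H d)"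
    for d t
  proof -
    have r: "A *v xt k + B *v (y k + t *\<^sub>R d) - b = r + t *\<^sub>R (B *v d)"
      by (simp add: r_def matrix_vector_right_distrib matrix_vector_mult_scaleR algebra_simps)
    have e: "y k + t *\<^sub>R d - y (k - 1) = e + t *\<^sub>R d" by (simp add: e_def)
    have "Q (y k + t *\<^sub>R d) = - (\<gamma>h k \<bullet> (B *v (y k + t *\<^sub>R d)))
        + \<beta> / 2 * norm (r + t *\<^sub>R (B *v d))^2 + 1/2 * qnorm2 H (e + t *\<^sub>R d)"
      unfolding Q_def r e ..
    moreover have "Q (y k) = - (\<gamma>h k \<bullet> (B *v y k)) + \<beta> / 2 * norm r^2 + 1/2 * qnorm2 H e"
      by (simp add: Q_def r_def e_def)
    moreover have "norm (r + t *\<^sub>R (B *v d))^2 = norm r^2 + 2 * t * (r \<bullet> (B *v d)) + t\<^sup>2 * ((B *v d) \<bullet> (B *v d))"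
      unfolding power2_norm_eq_inner
      by (simp add: inner_add_left inner_add_right inner_commute[of "B *v d" r] power2_eq_square algebra_simps)
    ultimately show ?thesis
      using sym_mat_inner_commute[OF H_sym, of e d]
      by (simp add: v_def q qnorm2_add[OF H_sym] qnorm2_scaleR
          matrix_vector_right_distrib matrix_vector_mult_scaleR dot_lmul_matrix
          inner_add_left inner_add_right inner_diff_left field_simps power2_eq_square)
  qed
  moreover have "g (y k) + ereal (Q (y k)) \<le> g w + ereal (Q w)" for w
    using y_opt[OF k] by (simp add: Q_def)
  ultimately have "- v \<in> subdiff g (y k)"
    by (intro subdiff_of_minimizer_plus_quadratic[OF g_proper g_convex])
  then show ?thesis by (simp add: v_def e_def)
qed

lemma y_step_inequality:
  assumes k: "k \<ge> 2"
  shows "2 * (1 + \<tau>) * (p k \<bullet> q k) \<ge> 2 * (1 - \<theta>) * (p k \<bullet> q (k - 1)) - 2 * \<tau> * \<beta> * norm (p k)^2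
           + qnorm2 H (y k - y (k - 1)) - qnorm2 H (y (k - 1) - y (k - 2))"
proof -
  define e where "e = y k - y (k - 1)"
  define e' where "e' = y (k - 1) - y (k - 2)"
  have k1: "k \<ge> 1" "k - 1 \<ge> 1" and km: "k - 1 - 1 = k - 2" using k by auto
  have p: "p k = B *v e" using p_def[OF k1(1)] by (simp add: e_def)
  have "0 \<le> ((transpose B *v (\<gamma>h k + q k) - H *v e)
      - (transpose B *v (\<gamma>h (k - 1) + q (k - 1)) - H *v e')) \<bullet> e"
    using subdiff_monotone[OF g_neq_minf y_step_subgradient[OF k1(1)] y_step_subgradient[OF k1(2)]]
    unfolding e_def e'_def km .
  also have "\<dots> = ((\<gamma>h k + q k) - (\<gamma>h (k - 1) + q (k - 1))) \<bullet> p k - qnorm2 H e + (H *v e') \<bullet> e"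
    by (simp add: p qnorm2_def dot_lmul_matrix inner_diff_left)
  also have "\<dots> = (1 + \<tau>) * (p k \<bullet> q k) + \<tau> * \<beta> * (p k \<bullet> p k) - (1 - \<theta>) * (p k \<bullet> q (k - 1))
      - qnorm2 H e + (H *v e') \<bullet> e"
    unfolding multiplier_increment[OF k] by (simp add: inner_diff_right inner_add_right inner_commute)
  finally show ?thesis
    using pos_semidef_inner_le[OF H_psd, of e' e]
    unfolding power2_norm_eq_inner e_def[symmetric] e'_def[symmetric] by (simp add: algebra_simps)
qed

lemma first_step_f_monotone:
  assumes "(xs, ys, gs) \<in> T_zeros f g A B b"
  shows "0 \<le> u 1 \<bullet> (xt 1 - xs)
    + (q 1 + \<beta> *\<^sub>R p 1 - (gs - \<gamma> 0)) \<bullet> (B *v (ys - y 0) - p 1 - (1 / \<beta>) *\<^sub>R q 1)"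
proof -
  have sol: "transpose A *v gs \<in> subdiff f xs" "A *v xs = b - B *v ys"
    using assms by (auto simp: T_zeros_def algebra_simps)
  have "A *v xt 1 + B *v y 1 - b = - (1 / \<beta>) *\<^sub>R q 1" using \<beta>_pos by (simp add: q_def)
  then have A_step: "A *v (xt 1 - xs) = B *v (ys - y 0) - p 1 - (1 / \<beta>) *\<^sub>R q 1"
    by (simp add: sol(2) p_def matrix_vector_mult_diff_distrib algebra_simps eq_diff_eq)
  have f_neq_minf: "f z \<noteq> -\<infinity>" for z using f_proper by (simp add: proper_fun_def)
  have \<gamma>t_diff: "\<gamma>t 1 - gs = q 1 + \<beta> *\<^sub>R p 1 - (gs - \<gamma> 0)"
    using \<gamma>t_eq[of 1] by (simp add: algebra_simps)
  have "0 \<le> (u 1 + transpose A *v \<gamma>t 1 - transpose A *v gs) \<bullet> (xt 1 - xs)"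
    using subdiff_monotone[OF f_neq_minf u_sub[OF order_refl] sol(1)] by simp
  also have "\<dots> = u 1 \<bullet> (xt 1 - xs) + (\<gamma>t 1 - gs) \<bullet> (A *v (xt 1 - xs))"
    by (simp add: dot_lmul_matrix inner_add_left inner_diff_left)
  finally show ?thesis
    unfolding A_step \<gamma>t_diff .
qed

lemma first_step_g_monotone:
  assumes "(xs, ys, gs) \<in> T_zeros f g A B b"
  shows "0 \<le> ((1 + \<tau>) *\<^sub>R q 1 + (\<tau> * \<beta>) *\<^sub>R p 1 - (gs - \<gamma> 0)) \<bullet> (p 1 - B *v (ys - y 0))
    + (H *v (y 1 - y 0)) \<bullet> (ys - y 0) - qnorm2 H (y 1 - y 0)"
proof -
  have sol: "transpose B *v gs \<in> subdiff g ys"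
    using assms by (simp add: T_zeros_def)
  have "0 \<le> (transpose B *v (\<gamma>h 1 + q 1) - H *v (y 1 - y 0) - transpose B *v gs) \<bullet> (y 1 - ys)"
    using subdiff_monotone[OF g_neq_minf y_step_subgradient[OF order_refl] sol] by simp
  also have "\<dots> = (\<gamma>h 1 + q 1 - gs) \<bullet> (B *v (y 1 - ys)) - (H *v (y 1 - y 0)) \<bullet> (y 1 - ys)"
    by (simp add: dot_lmul_matrix inner_add_left inner_diff_left)
  also have "\<dots> = ((1 + \<tau>) *\<^sub>R q 1 + (\<tau> * \<beta>) *\<^sub>R p 1 - (gs - \<gamma> 0)) \<bullet> (p 1 - B *v (ys - y 0))
      + (H *v (y 1 - y 0)) \<bullet> (ys - y 0) - qnorm2 H (y 1 - y 0)"
  proof -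
    have B_diff: "B *v (y 1 - ys) = p 1 - B *v (ys - y 0)"
      by (simp add: p_def matrix_vector_mult_diff_distrib)
    have \<gamma>h_diff: "\<gamma>h 1 + q 1 - gs = (1 + \<tau>) *\<^sub>R q 1 + (\<tau> * \<beta>) *\<^sub>R p 1 - (gs - \<gamma> 0)"
      using \<gamma>h_eq[of 1] by (simp add: algebra_simps)
    have "(H *v (y 1 - y 0)) \<bullet> (y 1 - ys) = qnorm2 H (y 1 - y 0) - (H *v (y 1 - y 0)) \<bullet> (ys - y 0)"
      by (simp add: qnorm2_def inner_diff_right)
    then show ?thesis
      unfolding B_diff \<gamma>h_diff by linarith
  qed
  finally show ?thesis .
qed

lemma first_step_Mnorm2_bound:
  assumes sol: "(xs, ys, gs) \<in> T_zeros f g A B b"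
  shows "3 * qnorm2 H (y 1 - y 0) + pq_form \<beta> \<tau> \<theta> \<sigma>t (p 1) (q 1)
    \<le> 4 * Mnorm2 G H B \<beta> \<tau> \<theta> ((xs, ys, gs) - (x 0, y 0, \<gamma> 0))"
proof -
  have G_psd: "pos_semidef G" using G_pd by (rule pos_def_imp_pos_semidef)
  define w where "w = matrix_inv G *v u 1"
  define X0 where "X0 = xs - x 0"
  define Xt where "Xt = xt 1 - x 0"
  define Y where "Y = ys - y 0"
  define e where "e = y 1 - y 0"
  define v where "v = B *v Y"
  define a where "a = gs - \<gamma> 0"
  define P where "P = p 1"
  define Q where "Q = q 1"
  define mon_f where "mon_f = (Q + \<beta> *\<^sub>R P - a) \<bullet> (v - P - (1 / \<beta>) *\<^sub>R Q)"
  define mon_g where "mon_g = ((1 + \<tau>) *\<^sub>R Q + (\<tau> * \<beta>) *\<^sub>R P - a) \<bullet> (P - v)"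
  define inexact where "inexact = \<sigma>t / \<beta> * ((Q + \<beta> *\<^sub>R P) \<bullet> (Q + \<beta> *\<^sub>R P))"
  define coupling_lb where "coupling_lb = (4 * ((a - (\<tau> * \<beta>) *\<^sub>R v) \<bullet> Q) - (\<tau> + \<theta>) * (Q \<bullet> Q)) / \<beta>
      + (1 - \<tau>) * \<beta> * (4 * (v \<bullet> P) - P \<bullet> P)"
  have "u 1 = G *v w" "xt 1 - xs = Xt - X0"
    using pos_def_matrix_inv_right[OF G_pd] by (simp_all add: w_def Xt_def X0_def)
  then have x_mono: "0 \<le> (G *v w) \<bullet> (Xt - X0) + mon_f"
    using first_step_f_monotone[OF sol] by (simp add: mon_f_def Q_def P_def a_def v_def Y_def)
  have y_mono: "0 \<le> mon_g + (H *v e) \<bullet> Y - qnorm2 H e"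
    using first_step_g_monotone[OF sol] by (simp add: mon_g_def Q_def P_def a_def v_def Y_def e_def)
  have "\<sigma>h * qnorm2 G Xt \<le> qnorm2 G Xt"
    using mult_right_mono[OF \<sigma>h_le_1, of "qnorm2 G Xt"] G_psd by (simp add: pos_semidef_def)
  then have x_err: "qnorm2 G (Xt + w) \<le> inexact + qnorm2 G Xt"
    using err[OF order_refl] \<gamma>t_eq[of 1]
    by (simp add: inexact_def Xt_def w_def Q_def P_def power2_norm_eq_inner)
  have "0 < \<tau> + \<theta>" "\<tau> < 1" using region \<sigma>t_nonneg by (auto simp: admissible_region_def)
  then have coupling_bound: "coupling_lb \<le> 4 * coupling_norm2 \<beta> \<tau> \<theta> v a"
    unfolding coupling_lb_def by (intro four_coupling_norm2_ge \<beta>_pos)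
  have "coupling_lb - 4 * mon_f - 4 * mon_g - 2 * inexact = pq_form \<beta> \<tau> \<theta> \<sigma>t P Q"
    unfolding coupling_lb_def mon_f_def mon_g_def inexact_def by (rule first_step_identity[OF \<beta>_pos])
  then have "3 * qnorm2 H e + pq_form \<beta> \<tau> \<theta> \<sigma>t P Q
      = 3 * qnorm2 H e + coupling_lb - 4 * mon_f - 4 * mon_g - 2 * inexact"
    by simp
  also have "\<dots> \<le> (4 * ((G *v w) \<bullet> (Xt - X0)) - 2 * inexact) + (4 * ((H *v e) \<bullet> Y) - qnorm2 H e) + coupling_lb"
    using x_mono y_mono by linarith
  also have "\<dots> \<le> 4 * qnorm2 G X0 + 4 * qnorm2 H Y + 4 * coupling_norm2 \<beta> \<tau> \<theta> v a"
    using qnorm2_three_point_bound[OF G_psd, of w Xt X0] x_err four_qnorm2_ge[OF H_psd, of e Y]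
      coupling_bound
    by linarith
  also have "\<dots> = 4 * Mnorm2 G H B \<beta> \<tau> \<theta> ((xs, ys, gs) - (x 0, y 0, \<gamma> 0))"
    by (simp add: Mnorm2_eq X0_def Y_def v_def a_def)
  finally show ?thesis by (simp add: e_def P_def Q_def)
qed

lemma first_step_Mnorm2_min_bound:
  assumes "z \<in> T_zeros f g A B b"
  shows "- min (2 * vartheta \<tau> \<theta> \<sigma>t * (p 1 \<bullet> q 1)) (- qnorm2 H (y 1 - y 0))
    \<le> 4 * Mnorm2 G H B \<beta> \<tau> \<theta> (z - (x 0, y 0, \<gamma> 0))"
proof -
  obtain xs ys gs where "z = (xs, ys, gs)" by (cases z)
  then have "3 * qnorm2 H (y 1 - y 0) + pq_form \<beta> \<tau> \<theta> \<sigma>t (p 1) (q 1)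
      \<le> 4 * Mnorm2 G H B \<beta> \<tau> \<theta> (z - (x 0, y 0, \<gamma> 0))"
    using first_step_Mnorm2_bound assms by simp
  moreover have "0 \<le> qnorm2 H (y 1 - y 0)" using H_psd by (simp add: pos_semidef_def)
  ultimately show ?thesis
    using pq_form_nonneg[OF \<beta>_pos region \<sigma>t_nonneg, of "p 1" "q 1"]
      pq_form_ge_vartheta[OF \<beta>_pos region \<sigma>t_nonneg, of "p 1" "q 1"]
    by linarith
qed

end

lemma neg_mult_INF_le_ereal:
  fixes F :: "'a \<Rightarrow> real"
  assumes "0 < a" and bound: "\<And>z. z \<in> Z \<Longrightarrow> - c \<le> a * F z"
  shows "ereal (- a) * (INF z\<in>Z. ereal (F z)) \<le> ereal c"
proof -
  have "- c / a \<le> F z" if "z \<in> Z" for z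
    using bound[OF that] by (subst pos_divide_le_eq[OF assms(1)]) (simp add: mult.commute)
  then have "ereal (- c / a) \<le> (INF z\<in>Z. ereal (F z))"
    by (intro INF_greatest) simp
  then have "ereal a * ereal (- c / a) \<le> ereal a * (INF z\<in>Z. ereal (F z))"
    using assms(1) by (intro ereal_mult_left_mono) auto
  then have "- ereal c \<le> ereal a * (INF z\<in>Z. ereal (F z))"
    using assms(1) by simp
  then show ?thesis
    by (simp add: ereal_uminus_le_reorder flip: uminus_ereal.simps)
qed

theorem lemma2p8:
  fixes f :: "real^'n \<Rightarrow> ereal" and g :: "real^'p \<Rightarrow> ereal"
    and A :: "real^'n^'m" and B :: "real^'p^'m" and b :: "real^'m"
    and G :: "real^'n^'n" and H :: "real^'p^'p"
    and \<beta> \<sigma>t \<sigma>h \<tau> \<theta> :: real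
    and x :: "nat \<Rightarrow> real^'n" and y :: "nat \<Rightarrow> real^'p" and \<gamma> :: "nat \<Rightarrow> real^'m"
    and xt :: "nat \<Rightarrow> real^'n" and u :: "nat \<Rightarrow> real^'n" and \<gamma>t :: "nat \<Rightarrow> real^'m"
    and \<gamma>h :: "nat \<Rightarrow> real^'m"
    and p q :: "nat \<Rightarrow> real^'m"
  assumes f_pcc: "proper_fun f" "convex_fun f" "closed_fun f"
    and g_pcc: "proper_fun g" "convex_fun g" "closed_fun g"
    and sol_exists: "T_zeros f g A B b \<noteq> {}"
    and \<beta>_pos: "\<beta> > 0"
    and \<sigma>t: "0 \<le> \<sigma>t" "\<sigma>t < 1" and \<sigma>h: "0 \<le> \<sigma>h" "\<sigma>h < 1"
    and G_pd: "pos_def G" and H_psd: "pos_semidef H"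
    and region: "(\<tau>, \<theta>) \<in> admissible_region \<sigma>t"
    and \<gamma>t_def: "\<And>k. k \<ge> 1 \<Longrightarrow> \<gamma>t k = \<gamma> (k - 1) - \<beta> *\<^sub>R (A *v xt k + B *v y (k - 1) - b)"
    and u_sub: "\<And>k. k \<ge> 1 \<Longrightarrow> u k + transpose A *v \<gamma>t k \<in> subdiff f (xt k)"
    and err: "\<And>k. k \<ge> 1 \<Longrightarrow>
       qnorm2 G (xt k - x (k - 1) + matrix_inv G *v u k)
         \<le> (\<sigma>t / \<beta>) * norm (\<gamma>t k - \<gamma> (k - 1))^2 + \<sigma>h * qnorm2 G (xt k - x (k - 1))"
    and \<gamma>h_def: "\<And>k. k \<ge> 1 \<Longrightarrow> \<gamma>h k = \<gamma> (k - 1) - (\<tau> * \<beta>) *\<^sub>R (A *v xt k + B *v y (k - 1) - b)"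
    and y_opt: "\<And>k w. k \<ge> 1 \<Longrightarrow>
       g (y k) + ereal (- (\<gamma>h k \<bullet> (B *v y k)) + \<beta> / 2 * norm (A *v xt k + B *v y k - b)^2
                         + 1/2 * qnorm2 H (y k - y (k - 1)))
       \<le> g w + ereal (- (\<gamma>h k \<bullet> (B *v w)) + \<beta> / 2 * norm (A *v xt k + B *v w - b)^2
                         + 1/2 * qnorm2 H (w - y (k - 1)))"
    and x_def: "\<And>k. k \<ge> 1 \<Longrightarrow> x k = x (k - 1) - matrix_inv G *v u k"
    and \<gamma>_def: "\<And>k. k \<ge> 1 \<Longrightarrow> \<gamma> k = \<gamma>h k - (\<theta> * \<beta>) *\<^sub>R (A *v xt k + B *v y k - b)"
    and p_def: "\<And>k. k \<ge> 1 \<Longrightarrow> p k = B *v (y k - y (k - 1))"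
    and q_def: "\<And>k. k \<ge> 1 \<Longrightarrow> q k = - \<beta> *\<^sub>R (A *v xt k + B *v y k - b)"
  shows "ereal (min (2 * vartheta \<tau> \<theta> \<sigma>t * (p 1 \<bullet> q 1)) (- qnorm2 H (y 1 - y 0)))
           \<ge> - 4 * d0 f g A B b G H \<beta> \<tau> \<theta> (x 0, y 0, \<gamma> 0)
       \<and> (\<forall>k\<ge>2.
           2 * (1 + \<tau>) * (p k \<bullet> q k) \<ge> 2 * (1 - \<theta>) * (p k \<bullet> q (k - 1)) - 2 * \<tau> * \<beta> * norm (p k)^2
             + qnorm2 H (y k - y (k - 1)) - qnorm2 H (y (k - 1) - y (k - 2)))"
proof -
  interpret inexact_sym_admm f g A B b G H \<beta> \<sigma>t \<sigma>h \<tau> \<theta> x y \<gamma> xt u \<gamma>t \<gamma>h p q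
    using f_pcc(1) g_pcc(1,2) \<beta>_pos \<sigma>t(1) \<sigma>h(2) G_pd H_psd region
      \<gamma>t_def u_sub err \<gamma>h_def y_opt \<gamma>_def p_def q_def
    by unfold_locales auto
  have "ereal (- 4) * d0 f g A B b G H \<beta> \<tau> \<theta> (x 0, y 0, \<gamma> 0)
      \<le> ereal (min (2 * vartheta \<tau> \<theta> \<sigma>t * (p 1 \<bullet> q 1)) (- qnorm2 H (y 1 - y 0)))"
    unfolding d0_def by (rule neg_mult_INF_le_ereal[OF _ first_step_Mnorm2_min_bound]) simp
  then show ?thesis
    using y_step_inequality by auto
qed

end
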